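(* Let $T>0$. Define $\lambda(T)$ by $$\lambda(T)=\begin{cases}\dfrac{-q+\sqrt{q^2-4pr}}{2p} & \text{if } w^*_b\neq\tfrac12,\\[2mm] \dfrac{4\sum_{i\in\mathcal{K}'}I_i\log I_i+T+S}{2\sum_{i\in\mathcal{K}'}I_i} & \text{if } w^*_b=\tfrac12,\end{cases}$$ (where in the first case it is assumed that $q^2-4pr\ge0$), and define $W(T)=(W_1(T),\dots,W_k(T))$ by $W_i(T)=w^*_i\,\frac{\lambda(T)-2\log I_i}{1+T/S}$ for $i\in\mathcal{K}'$ and $W_b(T)=\sigma_b\sqrt{\sum_{i\in\mathcal{K}'}W_i(T)^2/\sigma_i^2}$. Let $I_{\max}=\max_{i\in\mathcal{K}'}I_i$ and $$T_1=2\sum_{i\in\mathcal{K}'}\Big[\frac{\sigma_b^2I_i^2}{\sigma_i^2(S-I_b)}-I_i\Big]\log\frac{I_{\max}}{I_i}-S,$$ $$T_2=2\sum_{i\in\mathcal{K}'}I_i\log\frac{I_{\max}}{I_i}+2\sigma_b\sqrt{\sum_{i\in\mathcal{K}'}\frac{I_i^2}{\sigma_i^2}\Big(\log\frac{I_{\max}}{I_i}\Big)^2}-S,$$ $$T_0=\begin{cases}\max\{T_1,T_2\}&\text{if } w^*_b\ne\tfrac12,\\ 4\sum_{i\in\mathcal{K}'}I_i\log\frac{I_{\max}}{I_i}-S&\text{if } w^*_b=\tfrac12.\end{cases}$$ If $T\ge T_0$, then $W_i(T)\ge0$ for all $i\in\mathcal{K}$.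
   Context: Let $k\ge 2$ and $\mathcal{K}=\{1,\dots,k\}$. For each $i\in\mathcal{K}$ fix real numbers $\mu_i$ and $\sigma_i>0$. Let $b\in\mathcal{K}$ be the unique index with $\mu_b<\mu_i$ for all $i\neq b$, and let $\mathcal{K}'=\mathcal{K}\setminus\{b\}$. For $i\in\mathcal{K}'$ put $\delta_{i,b}=\mu_i-\mu_b>0$ and $I_i=\sigma_i^2/\delta_{i,b}^2$; put $I_b=\sigma_b\sqrt{\sum_{i\in\mathcal{K}'}I_i^2/\sigma_i^2}$, $S=\sum_{i\in\mathcal{K}}I_i$, and $w^*_i=I_i/S$ for $i\in\mathcal{K}$. Define $p=S(2I_b-S)$, $q=-4\sigma_b^2\sum_{i\in\mathcal{K}'}\frac{I_i^2\log I_i}{\sigma_i^2}+2(S-I_b)\big(2\sum_{i\in\mathcal{K}'}I_i\log I_i+T+S\big)$, $r=4\sigma_b^2\sum_{i\in\mathcal{K}'}\frac{I_i^2\log^2I_i}{\sigma_i^2}-\big(2\sum_{i\in\mathcal{K}'}I_i\log I_i+T+S\big)^2$. *)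

theory Defs
  imports Complex_Main
begin

text \<open>Arms are indexed by 1..k; b is the best arm; mu, sigma the means and std deviations.\<close>

definition Kp :: "nat \<Rightarrow> nat \<Rightarrow> nat set" where
  "Kp k b = {1..k} - {b}"

definition Ibest :: "nat \<Rightarrow> (nat \<Rightarrow> real) \<Rightarrow> (nat \<Rightarrow> real) \<Rightarrow> nat \<Rightarrow> real" where
  "Ibest k mu sigma b =
     sigma b * sqrt (\<Sum>i\<in>Kp k b. ((sigma i)\<^sup>2 / (mu i - mu b)\<^sup>2)\<^sup>2 / (sigma i)\<^sup>2)"

definition II :: "nat \<Rightarrow> (nat \<Rightarrow> real) \<Rightarrow> (nat \<Rightarrow> real) \<Rightarrow> nat \<Rightarrow> nat \<Rightarrow> real" where
  "II k mu sigma b i =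
     (if i = b then Ibest k mu sigma b else (sigma i)\<^sup>2 / (mu i - mu b)\<^sup>2)"

definition SS :: "nat \<Rightarrow> (nat \<Rightarrow> real) \<Rightarrow> (nat \<Rightarrow> real) \<Rightarrow> nat \<Rightarrow> real" where
  "SS k mu sigma b = (\<Sum>i\<in>{1..k}. II k mu sigma b i)"

definition wstar :: "nat \<Rightarrow> (nat \<Rightarrow> real) \<Rightarrow> (nat \<Rightarrow> real) \<Rightarrow> nat \<Rightarrow> nat \<Rightarrow> real" where
  "wstar k mu sigma b i = II k mu sigma b i / SS k mu sigma b"

definition pp :: "nat \<Rightarrow> (nat \<Rightarrow> real) \<Rightarrow> (nat \<Rightarrow> real) \<Rightarrow> nat \<Rightarrow> real" where
  "pp k mu sigma b = SS k mu sigma b * (2 * II k mu sigma b b - SS k mu sigma b)"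

definition qq :: "nat \<Rightarrow> (nat \<Rightarrow> real) \<Rightarrow> (nat \<Rightarrow> real) \<Rightarrow> nat \<Rightarrow> real \<Rightarrow> real" where
  "qq k mu sigma b T =
     (let I = II k mu sigma b; S = SS k mu sigma b in
      - 4 * (sigma b)\<^sup>2 * (\<Sum>i\<in>Kp k b. (I i)\<^sup>2 * ln (I i) / (sigma i)\<^sup>2)
      + 2 * (S - I b) * (2 * (\<Sum>i\<in>Kp k b. I i * ln (I i)) + T + S))"

definition rr :: "nat \<Rightarrow> (nat \<Rightarrow> real) \<Rightarrow> (nat \<Rightarrow> real) \<Rightarrow> nat \<Rightarrow> real \<Rightarrow> real" where
  "rr k mu sigma b T =
     (let I = II k mu sigma b; S = SS k mu sigma b in
      4 * (sigma b)\<^sup>2 * (\<Sum>i\<in>Kp k b. (I i)\<^sup>2 * (ln (I i))\<^sup>2 / (sigma i)\<^sup>2)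
      - (2 * (\<Sum>i\<in>Kp k b. I i * ln (I i)) + T + S)\<^sup>2)"

definition lam :: "nat \<Rightarrow> (nat \<Rightarrow> real) \<Rightarrow> (nat \<Rightarrow> real) \<Rightarrow> nat \<Rightarrow> real \<Rightarrow> real" where
  "lam k mu sigma b T =
     (let I = II k mu sigma b; S = SS k mu sigma b;
          p = pp k mu sigma b; q = qq k mu sigma b T; r = rr k mu sigma b T in
      if wstar k mu sigma b b \<noteq> 1/2
      then (- q + sqrt (q\<^sup>2 - 4 * p * r)) / (2 * p)
      else (4 * (\<Sum>i\<in>Kp k b. I i * ln (I i)) + T + S) / (2 * (\<Sum>i\<in>Kp k b. I i)))"

definition Wsub :: "nat \<Rightarrow> (nat \<Rightarrow> real) \<Rightarrow> (nat \<Rightarrow> real) \<Rightarrow> nat \<Rightarrow> real \<Rightarrow> nat \<Rightarrow> real" where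
  "Wsub k mu sigma b T i =
     wstar k mu sigma b i * (lam k mu sigma b T - 2 * ln (II k mu sigma b i))
       / (1 + T / SS k mu sigma b)"

definition W :: "nat \<Rightarrow> (nat \<Rightarrow> real) \<Rightarrow> (nat \<Rightarrow> real) \<Rightarrow> nat \<Rightarrow> real \<Rightarrow> nat \<Rightarrow> real" where
  "W k mu sigma b T i =
     (if i = b then sigma b * sqrt (\<Sum>j\<in>Kp k b. (Wsub k mu sigma b T j)\<^sup>2 / (sigma j)\<^sup>2)
      else Wsub k mu sigma b T i)"

definition Imax :: "nat \<Rightarrow> (nat \<Rightarrow> real) \<Rightarrow> (nat \<Rightarrow> real) \<Rightarrow> nat \<Rightarrow> real" where
  "Imax k mu sigma b = Max (II k mu sigma b ` Kp k b)"

definition T1 :: "nat \<Rightarrow> (nat \<Rightarrow> real) \<Rightarrow> (nat \<Rightarrow> real) \<Rightarrow> nat \<Rightarrow> real" where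
  "T1 k mu sigma b =
     (let I = II k mu sigma b; S = SS k mu sigma b; M = Imax k mu sigma b in
      2 * (\<Sum>i\<in>Kp k b. ((sigma b)\<^sup>2 * (I i)\<^sup>2 / ((sigma i)\<^sup>2 * (S - I b)) - I i)
                           * ln (M / I i)) - S)"

definition T2 :: "nat \<Rightarrow> (nat \<Rightarrow> real) \<Rightarrow> (nat \<Rightarrow> real) \<Rightarrow> nat \<Rightarrow> real" where
  "T2 k mu sigma b =
     (let I = II k mu sigma b; S = SS k mu sigma b; M = Imax k mu sigma b in
      2 * (\<Sum>i\<in>Kp k b. I i * ln (M / I i))
      + 2 * sigma b * sqrt (\<Sum>i\<in>Kp k b. (I i)\<^sup>2 / (sigma i)\<^sup>2 * (ln (M / I i))\<^sup>2) - S)"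

definition T0 :: "nat \<Rightarrow> (nat \<Rightarrow> real) \<Rightarrow> (nat \<Rightarrow> real) \<Rightarrow> nat \<Rightarrow> real" where
  "T0 k mu sigma b =
     (if wstar k mu sigma b b \<noteq> 1/2 then max (T1 k mu sigma b) (T2 k mu sigma b)
      else 4 * (\<Sum>i\<in>Kp k b. II k mu sigma b i * ln (Imax k mu sigma b / II k mu sigma b i))
           - SS k mu sigma b)"

end

theory Submission
  imports Defs
begin

(*
  W_i(T) has the sign of lam(T) - 2 ln I_i, so it suffices to show lam(T) >= 2 ln Imax.
  For w_b = 1/2 this is the bound T >= T0 rewritten. Otherwise lam(T) is a root of
  g(x) = p x^2 + q x + r. Writing ln I_i = ln Imax - a_i with a_i >= 0, one finds
  g(2 ln Imax) = 4 sigma_b^2 E - G^2 and g'(2 ln Imax) = 4 sigma_b^2 F + 2 P G with E, F >= 0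
  and G = T + S - 2 sum I_i a_i. The bound T >= T2 says exactly G >= 2 sigma_b sqrt E, so g is
  nonpositive and nondecreasing at 2 ln Imax, and the root lies to its right.
*)

(* No discriminant hypothesis: Isabelle's sqrt is the odd extension, monotone on all of the reals. *)
lemma le_quadratic_root:
  fixes p q r x :: real
  assumes "p \<noteq> 0" and "p * x\<^sup>2 + q * x + r \<le> 0" and "0 \<le> 2 * p * x + q"
  shows "x \<le> (- q + sqrt (q\<^sup>2 - 4 * p * r)) / (2 * p)"
proof -
  define h where "h = 2 * p * x + q"
  have disc: "q\<^sup>2 - 4 * p * r = h\<^sup>2 - 4 * p * (p * x\<^sup>2 + q * x + r)"
    unfolding h_def by (simp add: power2_eq_square algebra_simps)
  have sqrt_h: "sqrt (h\<^sup>2) = h"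
    using assms(3) by (simp add: h_def)
  show ?thesis
  proof (cases "p > 0")
    case True
    have "h\<^sup>2 \<le> q\<^sup>2 - 4 * p * r"
      using disc True assms(2) by (simp add: mult_nonneg_nonpos)
    then have "h \<le> sqrt (q\<^sup>2 - 4 * p * r)"
      using real_sqrt_le_mono sqrt_h by metis
    then show ?thesis
      using True by (simp add: h_def pos_le_divide_eq algebra_simps)
  next
    case False
    with assms(1) have "p < 0" by simp
    have "q\<^sup>2 - 4 * p * r \<le> h\<^sup>2"
      using disc \<open>p < 0\<close> assms(2) by (simp add: mult_nonpos_nonpos)
    then have "sqrt (q\<^sup>2 - 4 * p * r) \<le> h"
      using real_sqrt_le_mono sqrt_h by metis
    then show ?thesis
      using \<open>p < 0\<close> by (simp add: h_def neg_le_divide_eq algebra_simps)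
  qed
qed

locale arms =
  fixes k b :: nat and mu sigma :: "nat \<Rightarrow> real"
  assumes two_le_k: "2 \<le> k"
    and best_arm: "b \<in> {1..k}"
    and mu_best_less: "\<And>i. i \<in> {1..k} \<Longrightarrow> i \<noteq> b \<Longrightarrow> mu b < mu i"
    and sigma_pos: "\<And>i. i \<in> {1..k} \<Longrightarrow> 0 < sigma i"
begin

abbreviation "K \<equiv> Kp k b"
abbreviation "I \<equiv> II k mu sigma b"
abbreviation "S \<equiv> SS k mu sigma b"
abbreviation "M \<equiv> Imax k mu sigma b"

definition c :: "nat \<Rightarrow> real" where "c i = (I i)\<^sup>2 / (sigma i)\<^sup>2"
definition a :: "nat \<Rightarrow> real" where "a i = ln (M / I i)"

definition P :: real where "P = (\<Sum>i\<in>K. I i)"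
definition B :: real where "B = (\<Sum>i\<in>K. c i)"
definition F :: real where "F = (\<Sum>i\<in>K. c i * a i)"
definition E :: real where "E = (\<Sum>i\<in>K. c i * (a i)\<^sup>2)"
definition Ia :: real where "Ia = (\<Sum>i\<in>K. I i * a i)"

lemma mem_K_iff: "i \<in> K \<longleftrightarrow> i \<in> {1..k} \<and> i \<noteq> b"
  by (auto simp: Kp_def)

lemma finite_K: "finite K"
  by (simp add: Kp_def)

lemma K_nonempty: "K \<noteq> {}"
proof -
  have "(if b = 1 then 2 else 1) \<in> K"
    using two_le_k best_arm by (auto simp: mem_K_iff)
  then show ?thesis by blast
qed

lemma I_pos: "i \<in> K \<Longrightarrow> 0 < I i"
proof -
  assume "i \<in> K"
  then have "i \<noteq> b" and "mu b < mu i" and "0 < sigma i"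
    using mu_best_less sigma_pos by (auto simp: mem_K_iff)
  then show ?thesis by (simp add: II_def)
qed

lemma P_pos: "0 < P"
  unfolding P_def using finite_K K_nonempty I_pos by (simp add: sum_pos)

lemma sigma_best_pos: "0 < sigma b"
  using sigma_pos best_arm by blast

lemma I_best_eq: "I b = sigma b * sqrt B"
proof -
  have "B = (\<Sum>i\<in>K. ((sigma i)\<^sup>2 / (mu i - mu b)\<^sup>2)\<^sup>2 / (sigma i)\<^sup>2)"
    unfolding B_def by (rule sum.cong) (auto simp: c_def II_def mem_K_iff)
  then show ?thesis by (simp add: II_def Ibest_def)
qed

lemma B_nonneg: "0 \<le> B"
  unfolding B_def c_def by (rule sum_nonneg) simp

lemma I_best_nonneg: "0 \<le> I b"
  using I_best_eq B_nonneg sigma_best_pos by simp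

lemma S_eq: "S = I b + P"
  using best_arm by (simp add: SS_def P_def Kp_def sum.remove)

lemma S_pos: "0 < S"
  using S_eq I_best_nonneg P_pos by simp

lemma I_le_Imax: "i \<in> K \<Longrightarrow> I i \<le> M"
  using finite_K by (simp add: Imax_def)

lemma Imax_pos: "0 < M"
  using I_pos I_le_Imax K_nonempty by (meson all_not_in_conv less_le_trans)

lemma a_nonneg: "i \<in> K \<Longrightarrow> 0 \<le> a i"
  using I_pos I_le_Imax by (simp add: a_def)

lemma ln_I_eq: "i \<in> K \<Longrightarrow> ln (I i) = ln M - a i"
  using I_pos[of i] Imax_pos by (simp add: a_def ln_div)

lemma E_nonneg: "0 \<le> E"
  unfolding E_def c_def by (rule sum_nonneg) simp

lemma F_nonneg: "0 \<le> F"
  unfolding F_def c_def using a_nonneg by (intro sum_nonneg) simp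

lemma sum_I_ln_I: "(\<Sum>i\<in>K. I i * ln (I i)) = ln M * P - Ia"
proof -
  have "(\<Sum>i\<in>K. I i * ln (I i)) = (\<Sum>i\<in>K. ln M * I i - I i * a i)"
    by (rule sum.cong) (auto simp: ln_I_eq algebra_simps)
  then show ?thesis by (simp add: sum_subtractf sum_distrib_left P_def Ia_def)
qed

lemma sum_c_ln_I: "(\<Sum>i\<in>K. (I i)\<^sup>2 * ln (I i) / (sigma i)\<^sup>2) = ln M * B - F"
proof -
  have "(\<Sum>i\<in>K. (I i)\<^sup>2 * ln (I i) / (sigma i)\<^sup>2) = (\<Sum>i\<in>K. ln M * c i - c i * a i)"
    by (rule sum.cong) (simp_all add: ln_I_eq c_def diff_divide_distrib algebra_simps)
  then show ?thesis by (simp add: sum_subtractf sum_distrib_left B_def F_def)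
qed

lemma sum_c_ln_I_sq:
  "(\<Sum>i\<in>K. (I i)\<^sup>2 * (ln (I i))\<^sup>2 / (sigma i)\<^sup>2) = (ln M)\<^sup>2 * B - 2 * ln M * F + E"
proof -
  have "(\<Sum>i\<in>K. (I i)\<^sup>2 * (ln (I i))\<^sup>2 / (sigma i)\<^sup>2)
      = (\<Sum>i\<in>K. (ln M)\<^sup>2 * c i - 2 * ln M * (c i * a i) + c i * (a i)\<^sup>2)"
    by (rule sum.cong) (simp_all add: ln_I_eq c_def power2_eq_square diff_divide_distrib add_divide_distrib algebra_simps)
  then show ?thesis
    by (simp add: sum.distrib sum_subtractf sum_distrib_left B_def F_def E_def)
qed

lemma pp_eq: "pp k mu sigma b = (sigma b)\<^sup>2 * B - P\<^sup>2"
  using S_eq I_best_eq B_nonneg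
  by (simp add: pp_def power_mult_distrib power2_eq_square algebra_simps)

lemma qq_eq:
  "qq k mu sigma b T = - 4 * (sigma b)\<^sup>2 * (ln M * B - F) + 2 * P * (2 * (ln M * P - Ia) + T + S)"
  using S_eq by (simp add: qq_def Let_def sum_c_ln_I sum_I_ln_I)

lemma rr_eq:
  "rr k mu sigma b T
     = 4 * (sigma b)\<^sup>2 * ((ln M)\<^sup>2 * B - 2 * ln M * F + E) - (2 * (ln M * P - Ia) + T + S)\<^sup>2"
  by (simp add: rr_def Let_def sum_c_ln_I_sq sum_I_ln_I)

lemma quadratic_at_two_ln_Imax:
  "pp k mu sigma b * (2 * ln M)\<^sup>2 + qq k mu sigma b T * (2 * ln M) + rr k mu sigma b T
     = 4 * (sigma b)\<^sup>2 * E - (T + S - 2 * Ia)\<^sup>2"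
  unfolding pp_eq qq_eq rr_eq by (simp add: power2_eq_square algebra_simps)

lemma slope_at_two_ln_Imax:
  "2 * pp k mu sigma b * (2 * ln M) + qq k mu sigma b T = 4 * (sigma b)\<^sup>2 * F + 2 * P * (T + S - 2 * Ia)"
  unfolding pp_eq qq_eq by (simp add: power2_eq_square algebra_simps)

lemma pp_nonzero:
  assumes "wstar k mu sigma b b \<noteq> 1/2"
  shows "pp k mu sigma b \<noteq> 0"
  using assms S_pos by (auto simp: pp_def wstar_def)

lemma T2_eq: "T2 k mu sigma b = 2 * Ia + 2 * sigma b * sqrt E - S"
  by (simp add: T2_def Let_def Ia_def E_def a_def c_def)

lemma two_ln_Imax_le_lam:
  assumes "T0 k mu sigma b \<le> T"
  shows "2 * ln M \<le> lam k mu sigma b T"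
proof (cases "wstar k mu sigma b b = 1/2")
  case True
  have "4 * Ia - S \<le> T"
    using assms True by (simp add: T0_def Ia_def a_def)
  then have "2 * ln M * (2 * P) \<le> 4 * (\<Sum>i\<in>K. I i * ln (I i)) + T + S"
    by (simp add: sum_I_ln_I algebra_simps)
  then show ?thesis
    using True P_pos by (simp add: lam_def Let_def P_def pos_le_divide_eq)
next
  case False
  define G where "G = T + S - 2 * Ia"
  have "2 * sigma b * sqrt E \<le> G"
    using assms False by (simp add: T0_def T2_eq G_def)
  moreover have "0 \<le> 2 * sigma b * sqrt E"
    using sigma_best_pos E_nonneg by simp
  ultimately have "0 \<le> G" and "4 * (sigma b)\<^sup>2 * E \<le> G\<^sup>2"
    using power_mono[of "2 * sigma b * sqrt E" G 2] E_nonneg by (auto simp: power_mult_distrib)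
  then show ?thesis
    using False pp_nonzero F_nonneg P_pos sigma_best_pos
      quadratic_at_two_ln_Imax[of T] slope_at_two_ln_Imax[of T]
      le_quadratic_root[of "pp k mu sigma b" "2 * ln M" "qq k mu sigma b T" "rr k mu sigma b T"]
    by (simp add: lam_def Let_def G_def)
qed

lemma W_nonneg:
  assumes "- S < T" and "2 * ln M \<le> lam k mu sigma b T" and "i \<in> {1..k}"
  shows "0 \<le> W k mu sigma b T i"
proof (cases "i = b")
  case True
  then show ?thesis using sigma_best_pos by (simp add: W_def sum_nonneg)
next
  case False
  with assms(3) have "i \<in> K" by (simp add: mem_K_iff)
  then have "0 \<le> lam k mu sigma b T - 2 * ln (I i)"
    using assms(2) ln_I_eq a_nonneg by force
  moreover have "0 < wstar k mu sigma b i"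
    using \<open>i \<in> K\<close> I_pos S_pos by (simp add: wstar_def)
  moreover have "0 < 1 + T / S"
    using assms(1) S_pos by (simp add: field_simps)
  ultimately show ?thesis
    using False by (simp add: W_def Wsub_def)
qed

end

theorem lemma3:
  fixes k b :: nat and mu sigma :: "nat \<Rightarrow> real" and T :: real
  assumes "k \<ge> 2"
    and "b \<in> {1..k}"
    and "\<forall>i\<in>{1..k}. i \<noteq> b \<longrightarrow> mu b < mu i"
    and "\<forall>i\<in>{1..k}. sigma i > 0"
    and "T > 0"
    and "wstar k mu sigma b b \<noteq> 1/2 \<Longrightarrow>
           (qq k mu sigma b T)\<^sup>2 - 4 * pp k mu sigma b * rr k mu sigma b T \<ge> 0"
    and "T \<ge> T0 k mu sigma b"
  shows "\<forall>i\<in>{1..k}. W k mu sigma b T i \<ge> 0"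
proof -
  interpret arms k b mu sigma
    using assms(1-4) by unfold_locales auto
  have "2 * ln M \<le> lam k mu sigma b T"
    using assms(7) by (rule two_ln_Imax_le_lam)
  moreover have "- S < T"
    using assms(5) S_pos by simp
  ultimately show ?thesis
    using W_nonneg by blast
qed

end
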